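(* Let $G$ be a Whitney-maximum graph in $\mathcal{C}_{n,m}$. Then: (a) for every $k\in\{1,\ldots,n\}$, $G$ is $k$-uniformly most reliable, i.e. $R_G^{(k)}(p)\ge R_H^{(k)}(p)$ for all $H\in\mathcal{C}_{n,m}$ and all $p\in[0,1]$; (b) for every $k\in\{1,\ldots,n-1\}$, $\lambda^{(k)}(G)\ge\lambda^{(k)}(H)$ for all $H\in\mathcal{C}_{n,m}$; (c) for every $k\in\{1,\ldots,n\}$, $t_k(G)\ge t_k(H)$ for all $H\in\mathcal{C}_{n,m}$.
   Context: $\mathcal{C}_{n,m}$ denotes the set of all connected simple graphs on $n$ vertices and $m$ edges. For a graph $G$ with vertex set $V$, $\kappa(G)$ is its number of connected components, $r(G)=|V|-\kappa(G)$, $c(G)=|E(G)|-|V|+\kappa(G)$. $\mathcal{S}(G)$ is the set of all spanning subgraphs of $G$. The Whitney polynomial is $W_G(x,y)=\sum_{H\in\mathcal{S}(G)}x^{r(G)-r(H)}y^{c(H)}$. A bivariate polynomial is nonnegative if all its coefficients are nonnegative real numbers. $G\in\mathcal{C}_{n,m}$ is Whitney-maximum if for every $H\in\mathcal{C}_{n,m}$ there is a nonnegative polynomial $Q_H$ with $W_G(x,y)-W_H(x,y)=(1-xy)Q_H(x,y)$. $N_i^{(k)}(G)$ is the number of spanning subgraphs of $G$ with exactly $i$ edges and at most $k$ connected components. The $k$-reliability $R_G^{(k)}(p)=\sum_{i=0}^m N_i^{(k)}(G)p^i(1-p)^{m-i}$ is the probability that $G$ has at most $k$ connected components when each edge is independently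 retained with probability $p$. The $k$-order edge connectivity $\lambda^{(k)}(G)$ is the minimum number of edges whose removal from $G$ yields a spanning subgraph with more than $k$ connected components. $t_k(G)$ is the number of spanning forests of $G$ consisting of exactly $k$ trees. *)

theory Defs
  imports Main "HOL.Real"
begin

text \<open>Simple graphs on the vertex set {0..<n}; edges are 2-element vertex sets.
  A spanning subgraph of (V,E) is given by an edge set F \<subseteq> E.\<close>

definition simple_graph :: "nat set \<Rightarrow> nat set set \<Rightarrow> bool" where
  "simple_graph V E \<longleftrightarrow> finite V \<and>
     (\<forall>e\<in>E. \<exists>u v. e = {u, v} \<and> u \<noteq> v \<and> u \<in> V \<and> v \<in> V)"

definition adj :: "nat set set \<Rightarrow> nat \<Rightarrow> nat \<Rightarrow> bool" where
  "adj F u v \<longleftrightarrow> {u, v} \<in> F"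

definition reach :: "nat set set \<Rightarrow> nat \<Rightarrow> nat \<Rightarrow> bool" where
  "reach F = (adj F)\<^sup>*\<^sup>*"

definition kappa :: "nat set \<Rightarrow> nat set set \<Rightarrow> nat" where
  "kappa V F = card ((\<lambda>v. {u\<in>V. reach F v u}) ` V)"

definition connected_graph :: "nat set \<Rightarrow> nat set set \<Rightarrow> bool" where
  "connected_graph V E \<longleftrightarrow> (\<forall>u\<in>V. \<forall>v\<in>V. reach E u v)"

definition Cnm :: "nat \<Rightarrow> nat \<Rightarrow> nat set set set" where
  "Cnm n m = {E. simple_graph {0..<n} E \<and> card E = m \<and> connected_graph {0..<n} E}"

definition rk :: "nat set \<Rightarrow> nat set set \<Rightarrow> nat" where
  "rk V F = card V - kappa V F"

text \<open>cyclomatic number c(H) = |E(H)| - |V| + \<kappa>(H) (always \<ge> 0)\<close>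
definition cyc :: "nat set \<Rightarrow> nat set set \<Rightarrow> nat" where
  "cyc V F = card F + kappa V F - card V"

text \<open>Coefficient of x^i y^j in the Whitney polynomial W_G(x,y)
  = sum over spanning subgraphs H of x^(r(G)-r(H)) y^(c(H)).\<close>
definition whitney_coeff :: "nat set \<Rightarrow> nat set set \<Rightarrow> nat \<Rightarrow> nat \<Rightarrow> nat" where
  "whitney_coeff V E i j =
     card {F. F \<subseteq> E \<and> rk V E - rk V F = i \<and> cyc V F = j}"

text \<open>Whitney-maximum: W_G - W_H = (1 - xy) Q_H with Q_H a (finitely supported,
  i.e. polynomial) coefficient array with nonnegative real coefficients.
  The coefficient of x^i y^j in (1-xy)Q is Q i j - Q (i-1) (j-1).\<close>
definition whitney_maximum :: "nat \<Rightarrow> nat \<Rightarrow> nat set set \<Rightarrow> bool" where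
  "whitney_maximum n m G \<longleftrightarrow> G \<in> Cnm n m \<and>
     (\<forall>H\<in>Cnm n m. \<exists>Q :: nat \<Rightarrow> nat \<Rightarrow> real.
        finite {(i, j). Q i j \<noteq> 0} \<and> (\<forall>i j. Q i j \<ge> 0) \<and>
        (\<forall>i j. real (whitney_coeff {0..<n} G i j) - real (whitney_coeff {0..<n} H i j)
               = Q i j - (if 0 < i \<and> 0 < j then Q (i - 1) (j - 1) else 0)))"

definition Nik :: "nat set \<Rightarrow> nat set set \<Rightarrow> nat \<Rightarrow> nat \<Rightarrow> nat" where
  "Nik V E k i = card {F. F \<subseteq> E \<and> card F = i \<and> kappa V F \<le> k}"

definition k_reliability :: "nat set \<Rightarrow> nat set set \<Rightarrow> nat \<Rightarrow> real \<Rightarrow> real" where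
  "k_reliability V E k p =
     (\<Sum>i = 0..card E. real (Nik V E k i) * p ^ i * (1 - p) ^ (card E - i))"

definition edge_conn_k :: "nat set \<Rightarrow> nat set set \<Rightarrow> nat \<Rightarrow> nat" where
  "edge_conn_k V E k = Min {card S | S. S \<subseteq> E \<and> kappa V (E - S) > k}"

text \<open>A forest: no edge lies on a cycle, i.e. the endpoints of each edge are
  disconnected after removing that edge.\<close>
definition forest :: "nat set set \<Rightarrow> bool" where
  "forest F \<longleftrightarrow> (\<forall>u v. {u, v} \<in> F \<longrightarrow> \<not> reach (F - {{u, v}}) u v)"

definition t_k :: "nat set \<Rightarrow> nat set set \<Rightarrow> nat \<Rightarrow> nat" where
  "t_k V E k = card {F. F \<subseteq> E \<and> forest F \<and> kappa V F = k}"

end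

theory Submission
  imports Defs
begin

text \<open>For a spanning subgraph \<open>F\<close> of a connected graph \<open>G\<close> on \<open>n\<close> vertices,
  \<open>r(G) - r(F) = \<kappa>(F) - 1\<close> and \<open>c(F) = |F| + \<kappa>(F) - n\<close>. Hence the spanning subgraphs with
  \<open>i\<close> edges and exactly \<open>j\<close> components are counted by the coefficient of \<open>x^(j-1) y^(i+j-n)\<close>
  in \<open>W_G\<close>, and the spanning forests with \<open>k\<close> trees (those with \<open>c(F) = 0\<close>) by the coefficient
  of \<open>x^(k-1)\<close>. Summing the coefficients of \<open>W_G - W_H = (1 - xy) Q\<close> over \<open>j \<le> k\<close> along a
  diagonal telescopes to \<open>N_i^(k)(G) - N_i^(k)(H) = Q(k-1, i+k-n) \<ge> 0\<close>, which gives (a) termwise;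
  (b) follows because \<open>\<lambda>^(k)\<close> is the least \<open>s\<close> with \<open>N_(m-s)^(k) < binom(m, m-s)\<close>, and (c) because
  the coefficient of \<open>(1 - xy) Q\<close> at \<open>x^(k-1) y^0\<close> is \<open>Q(k-1, 0) \<ge> 0\<close>.\<close>

lemma adj_sym: "adj F u v = adj F v u"
  by (simp add: adj_def insert_commute)

lemma reach_refl [simp]: "reach F x x"
  by (simp add: reach_def)

lemma reach_trans: "reach F x y \<Longrightarrow> reach F y z \<Longrightarrow> reach F x z"
  unfolding reach_def by (rule rtranclp_trans)

lemma reach_sym: "reach F x y \<Longrightarrow> reach F y x"
  unfolding reach_def
proof (induction rule: rtranclp_induct)
  case (step y z)
  have "(adj F)\<^sup>*\<^sup>* z y" using step(2) adj_sym by (metis r_into_rtranclp)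
  then show ?case using step(3) by (rule rtranclp_trans)
qed simp

lemma reach_mono: "F \<subseteq> F' \<Longrightarrow> reach F x y \<Longrightarrow> reach F' x y"
  unfolding reach_def adj_def by (erule rtranclp_mono[THEN predicate2D, rotated]) auto

lemma reach_edge: "{u, v} \<in> F \<Longrightarrow> reach F u v"
  unfolding reach_def by (rule r_into_rtranclp) (simp add: adj_def)

lemma reach_empty_iff: "reach {} x y \<longleftrightarrow> x = y"
proof
  assume "reach {} x y"
  then show "x = y" unfolding reach_def by (induction rule: rtranclp_induct) (auto simp: adj_def)
qed simp

lemma reach_insert_edge:
  "reach (insert {u, v} F) x y \<longleftrightarrow>
     reach F x y \<or> (reach F x u \<and> reach F v y) \<or> (reach F x v \<and> reach F u y)"
proof
  assume "reach (insert {u, v} F) x y"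
  then show "reach F x y \<or> (reach F x u \<and> reach F v y) \<or> (reach F x v \<and> reach F u y)"
    unfolding reach_def[of "insert {u, v} F"]
  proof (induction rule: rtranclp_induct)
    case (step y z)
    from step(2) have "(y = u \<and> z = v) \<or> (y = v \<and> z = u) \<or> reach F y z"
      by (auto simp: adj_def doubleton_eq_iff intro: reach_edge)
    then show ?case
    proof (elim disjE)
      assume "reach F y z"
      then show ?case using step(3) by (meson reach_trans)
    qed (use step(3) in auto)
  qed simp
next
  have uv: "reach (insert {u, v} F) u v" and vu: "reach (insert {u, v} F) v u"
    by (auto intro: reach_edge simp: insert_commute)
  have lift: "reach (insert {u, v} F) a b" if "reach F a b" for a b
    using that by (rule reach_mono[rotated]) auto
  assume "reach F x y \<or> (reach F x u \<and> reach F v y) \<or> (reach F x v \<and> reach F u y)"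
  then show "reach (insert {u, v} F) x y"
    by (elim disjE conjE) (meson lift reach_trans uv vu)+
qed

definition component :: "nat set \<Rightarrow> nat set set \<Rightarrow> nat \<Rightarrow> nat set" where
  "component V F x = {y \<in> V. reach F x y}"

lemma kappa_eq_card_components: "kappa V F = card (component V F ` V)"
  by (simp add: kappa_def component_def)

lemma component_eq_iff:
  assumes "x \<in> V" "y \<in> V"
  shows "component V F x = component V F y \<longleftrightarrow> reach F x y"
proof
  assume eq: "component V F x = component V F y"
  have "x \<in> component V F x" using assms(1) by (simp add: component_def)
  then have "x \<in> component V F y" by (simp only: eq)
  then have "reach F y x" by (simp add: component_def)
  then show "reach F x y" by (rule reach_sym)
next
  assume "reach F x y"
  then have "reach F x z \<longleftrightarrow> reach F y z" for z by (meson reach_sym reach_trans)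
  then show "component V F x = component V F y" by (simp add: component_def)
qed

lemma component_insert_edge:
  "component V (insert {u, v} F) x =
     (if reach F x u \<or> reach F x v then component V F u \<union> component V F v else component V F x)"
proof (cases "reach F x u \<or> reach F x v")
  case True
  then have "reach F x y \<or> (reach F x u \<and> reach F v y) \<or> (reach F x v \<and> reach F u y) \<longleftrightarrow>
      reach F u y \<or> reach F v y" for y
    by (meson reach_sym reach_trans)
  with True show ?thesis by (auto simp: component_def reach_insert_edge)
qed (auto simp: component_def reach_insert_edge)

lemma components_insert_edge:
  assumes "u \<in> V" "v \<in> V"
  shows "component V (insert {u, v} F) ` V =
           insert (component V F u \<union> component V F v)
             (component V F ` V - {component V F u, component V F v})"
proof (intro equalityI subsetI)
  let ?c = "component V F" and ?c' = "component V (insert {u, v} F)"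
  fix X
  assume "X \<in> ?c' ` V"
  then obtain x where x: "x \<in> V" "X = ?c' x" by blast
  show "X \<in> insert (?c u \<union> ?c v) (?c ` V - {?c u, ?c v})"
  proof (cases "reach F x u \<or> reach F x v")
    case False
    then have "?c x \<noteq> ?c u" "?c x \<noteq> ?c v" using x assms by (simp_all add: component_eq_iff)
    then show ?thesis using x False by (simp add: component_insert_edge)
  qed (simp add: x component_insert_edge)
next
  let ?c = "component V F" and ?c' = "component V (insert {u, v} F)"
  fix X
  assume X: "X \<in> insert (?c u \<union> ?c v) (?c ` V - {?c u, ?c v})"
  have "?c u \<union> ?c v = ?c' u" by (simp add: component_insert_edge)
  moreover have "X \<in> ?c' ` V" if "X = ?c x" "x \<in> V" "X \<noteq> ?c u" "X \<noteq> ?c v" for x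
    using that assms by (auto simp: component_insert_edge component_eq_iff intro: reach_sym)
  ultimately show "X \<in> ?c' ` V" using X assms by blast
qed

lemma kappa_insert_edge_reach:
  assumes "reach F u v"
  shows "kappa V (insert {u, v} F) = kappa V F"
proof -
  have "reach (insert {u, v} F) = reach F"
    using assms by (intro ext) (meson reach_insert_edge reach_sym reach_trans)
  then show ?thesis by (simp add: kappa_def)
qed

lemma kappa_insert_edge_not_reach:
  assumes "finite V" "u \<in> V" "v \<in> V" "\<not> reach F u v"
  shows "kappa V F = Suc (kappa V (insert {u, v} F))"
proof -
  let ?c = "component V F"
  have sub: "{?c u, ?c v} \<subseteq> ?c ` V" using assms(2,3) by blast
  have "?c u \<noteq> ?c v" using assms by (simp add: component_eq_iff)
  then have "card {?c u, ?c v} = 2" by simp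
  then have "card (?c ` V) = card (?c ` V - {?c u, ?c v}) + 2"
    using card_Diff_subset[OF _ sub] card_mono[OF _ sub] assms(1) by simp
  moreover have "?c u \<union> ?c v \<notin> ?c ` V - {?c u, ?c v}"
  proof
    assume "?c u \<union> ?c v \<in> ?c ` V - {?c u, ?c v}"
    then obtain x where x: "x \<in> V" "?c u \<union> ?c v = ?c x" "?c x \<noteq> ?c u" by auto
    have "u \<in> ?c x" unfolding x(2)[symmetric] using assms(2) by (simp add: component_def)
    then have "reach F x u" by (simp add: component_def)
    then show False using x assms(2) by (simp add: component_eq_iff)
  qed
  ultimately show ?thesis
    using assms(1-3) by (simp add: kappa_eq_card_components components_insert_edge)
qed

lemma kappa_empty: "kappa V {} = card V"
proof -
  have "component V {} ` V = (\<lambda>v. {v}) ` V"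
    by (intro image_cong refl) (auto simp: component_def reach_empty_iff)
  then show ?thesis by (simp add: kappa_eq_card_components card_image)
qed

lemma kappa_le_Suc_kappa_insert_edge:
  assumes "finite V" "u \<in> V" "v \<in> V"
  shows "kappa V F \<le> Suc (kappa V (insert {u, v} F))"
  using kappa_insert_edge_reach[of F u v V] kappa_insert_edge_not_reach[OF assms, of F]
  by (cases "reach F u v") auto

lemma simple_graph_subset: "simple_graph V E \<Longrightarrow> F \<subseteq> E \<Longrightarrow> simple_graph V F"
  unfolding simple_graph_def by blast

lemma simple_graph_finite_edges:
  assumes "simple_graph V E"
  shows "finite E"
proof (rule finite_subset)
  show "E \<subseteq> Pow V" using assms by (auto simp: simple_graph_def)
  show "finite (Pow V)" using assms by (simp add: simple_graph_def)
qed

lemma card_le_card_plus_kappa: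
  assumes "simple_graph V F"
  shows "card V \<le> card F + kappa V F"
  using simple_graph_finite_edges[OF assms] assms
proof (induction F rule: finite_induct)
  case empty
  then show ?case by (simp add: kappa_empty)
next
  case (insert e F)
  then obtain u v where e: "e = {u, v}" "u \<in> V" "v \<in> V" "finite V"
    by (auto simp: simple_graph_def)
  have "card V \<le> card F + kappa V F"
    using insert.IH insert.prems simple_graph_subset by blast
  also have "\<dots> \<le> card (insert e F) + kappa V (insert e F)"
    using kappa_le_Suc_kappa_insert_edge[OF e(4,2,3), of F] e(1) insert.hyps by simp
  finally show ?case .
qed

lemma forest_subset: "forest F' \<Longrightarrow> F \<subseteq> F' \<Longrightarrow> forest F"
  unfolding forest_def by (meson Diff_mono order_refl reach_mono subsetD)

lemma card_plus_kappa_forest: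
  assumes "simple_graph V F" "forest F"
  shows "card F + kappa V F = card V"
  using simple_graph_finite_edges[OF assms(1)] assms
proof (induction F rule: finite_induct)
  case empty
  then show ?case by (simp add: kappa_empty)
next
  case (insert e F)
  then obtain u v where e: "e = {u, v}" "u \<in> V" "v \<in> V" "finite V"
    by (auto simp: simple_graph_def)
  have "card F + kappa V F = card V"
    using insert.IH insert.prems simple_graph_subset forest_subset by blast
  moreover have "\<not> reach F u v"
    using insert.prems(2) insert.hyps(2) e(1) by (auto simp: forest_def)
  ultimately show ?case
    using kappa_insert_edge_not_reach[OF e(4,2,3)] e(1) insert.hyps by simp
qed

lemma card_less_card_plus_kappa_not_forest:
  assumes "simple_graph V F" "\<not> forest F"
  shows "card V < card F + kappa V F"
proof -
  obtain u v where uv: "{u, v} \<in> F" "reach (F - {{u, v}}) u v"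
    using assms(2) by (auto simp: forest_def)
  let ?F0 = "F - {{u, v}}"
  have "kappa V F = kappa V ?F0"
    using kappa_insert_edge_reach[OF uv(2), of V] uv(1) by (simp add: insert_absorb)
  moreover have "card F = Suc (card ?F0)"
    using uv(1) simple_graph_finite_edges[OF assms(1)] by (metis card_Suc_Diff1)
  moreover have "card V \<le> card ?F0 + kappa V ?F0"
    using assms(1) by (intro card_le_card_plus_kappa) (auto intro: simple_graph_subset)
  ultimately show ?thesis by simp
qed

lemma forest_iff_card_plus_kappa:
  assumes "simple_graph V F"
  shows "forest F \<longleftrightarrow> card F + kappa V F = card V"
  using card_plus_kappa_forest card_less_card_plus_kappa_not_forest assms by fastforce

lemma kappa_pos: "finite V \<Longrightarrow> V \<noteq> {} \<Longrightarrow> 0 < kappa V F"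
  by (simp add: kappa_def card_gt_0_iff)

lemma kappa_le_card: "finite V \<Longrightarrow> kappa V F \<le> card V"
  unfolding kappa_def by (rule card_image_le)

lemma kappa_connected: "V \<noteq> {} \<Longrightarrow> connected_graph V E \<Longrightarrow> kappa V E = 1"
proof -
  assume "V \<noteq> {}" "connected_graph V E"
  then have "component V E ` V = {V}" by (auto simp: connected_graph_def component_def)
  then show ?thesis by (simp add: kappa_eq_card_components)
qed

lemma rk_diff_connected:
  assumes "finite V" "V \<noteq> {}" "connected_graph V E"
  shows "rk V E - rk V F = kappa V F - 1"
  using kappa_connected[OF assms(2,3)] kappa_pos[OF assms(1,2), of F] kappa_le_card[OF assms(1), of F]
  by (simp add: rk_def)

definition Nexact :: "nat set \<Rightarrow> nat set set \<Rightarrow> nat \<Rightarrow> nat \<Rightarrow> nat" where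
  "Nexact V E j i = card {F. F \<subseteq> E \<and> card F = i \<and> kappa V F = j}"

lemma Nexact_eq_whitney_coeff:
  assumes "simple_graph V E" "connected_graph V E" "V \<noteq> {}" "0 < j"
  shows "Nexact V E j i =
           (if card V \<le> i + j then whitney_coeff V E (j - 1) (i + j - card V) else 0)"
proof -
  have fin: "finite V" using assms(1) by (simp add: simple_graph_def)
  have bounds: "card V \<le> card F + kappa V F" "0 < kappa V F" if "F \<subseteq> E" for F
    using card_le_card_plus_kappa simple_graph_subset[OF assms(1) that] kappa_pos[OF fin assms(3)]
    by auto
  show ?thesis
  proof (cases "card V \<le> i + j")
    case True
    have "card F = i \<and> kappa V F = j \<longleftrightarrow>
          rk V E - rk V F = j - 1 \<and> cyc V F = i + j - card V" if "F \<subseteq> E" for F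
      using bounds[OF that] True assms(4)
      by (auto simp: rk_diff_connected[OF fin assms(3,2)] cyc_def)
    then have "{F. F \<subseteq> E \<and> card F = i \<and> kappa V F = j} =
               {F. F \<subseteq> E \<and> rk V E - rk V F = j - 1 \<and> cyc V F = i + j - card V}"
      by blast
    then show ?thesis using True by (simp add: Nexact_def whitney_coeff_def)
  next
    case False
    then have "{F. F \<subseteq> E \<and> card F = i \<and> kappa V F = j} = {}" using bounds by fastforce
    then have "Nexact V E j i = 0" unfolding Nexact_def by (simp only: card.empty)
    then show ?thesis using False by simp
  qed
qed

lemma t_k_eq_whitney_coeff:
  assumes "simple_graph V E" "connected_graph V E" "V \<noteq> {}" "0 < k"
  shows "t_k V E k = whitney_coeff V E (k - 1) 0"
proof -
  have fin: "finite V" using assms(1) by (simp add: simple_graph_def)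
  have "forest F \<and> kappa V F = k \<longleftrightarrow> rk V E - rk V F = k - 1 \<and> cyc V F = 0" if "F \<subseteq> E" for F
  proof -
    have "simple_graph V F" using assms(1) that by (rule simple_graph_subset)
    then have "card V \<le> card F + kappa V F" "forest F \<longleftrightarrow> card F + kappa V F = card V"
      by (rule card_le_card_plus_kappa, rule forest_iff_card_plus_kappa)
    then show ?thesis using kappa_pos[OF fin assms(3), of F] assms(4)
      by (auto simp: rk_diff_connected[OF fin assms(3,2)] cyc_def)
  qed
  then have "{F. F \<subseteq> E \<and> forest F \<and> kappa V F = k} =
             {F. F \<subseteq> E \<and> rk V E - rk V F = k - 1 \<and> cyc V F = 0}"
    by blast
  then show ?thesis by (simp add: t_k_def whitney_coeff_def)
qed

lemma Nik_eq_sum_Nexact: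
  assumes "finite V" "V \<noteq> {}" "finite E"
  shows "Nik V E k i = (\<Sum>j = 1..k. Nexact V E j i)"
proof -
  let ?S = "\<lambda>j. {F. F \<subseteq> E \<and> card F = i \<and> kappa V F = j}"
  have "{F. F \<subseteq> E \<and> card F = i \<and> kappa V F \<le> k} = (\<Union>j\<in>{1..k}. ?S j)"
    using kappa_pos[OF assms(1,2)] by (auto simp: Suc_le_eq)
  moreover have "card (\<Union>j\<in>{1..k}. ?S j) = (\<Sum>j = 1..k. card (?S j))"
    using assms(3) by (intro card_UN_disjoint) (auto intro: finite_subset[of _ "Pow E"])
  ultimately show ?thesis by (simp add: Nik_def Nexact_def)
qed

lemma sum_diagonal_telescope:
  fixes d Q :: "nat \<Rightarrow> nat \<Rightarrow> real"
  assumes "\<forall>a b. d a b = Q a b - (if 0 < a \<and> 0 < b then Q (a - 1) (b - 1) else 0)"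
  shows "(\<Sum>j = 1..k. if c \<le> i + j then d (j - 1) (i + j - c) else 0) =
           (if c \<le> i + k \<and> 0 < k then Q (k - 1) (i + k - c) else 0)"
proof (induction k)
  case (Suc k)
  show ?case
  proof (cases "c \<le> i + Suc k")
    case True
    then have "(0 < k \<and> 0 < i + Suc k - c) = (c \<le> i + k \<and> 0 < k)" "i + Suc k - c - 1 = i + k - c"
      by auto
    then show ?thesis using Suc True assms by simp
  qed (use Suc in simp)
qed simp

context
  fixes V :: "nat set" and G H :: "nat set set" and Q :: "nat \<Rightarrow> nat \<Rightarrow> real"
  assumes G: "simple_graph V G" "connected_graph V G"
    and H: "simple_graph V H" "connected_graph V H"
    and V_nonempty: "V \<noteq> {}"
    and Q_nonneg: "\<forall>i j. 0 \<le> Q i j"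
    and whitney_diff: "\<forall>i j. real (whitney_coeff V G i j) - real (whitney_coeff V H i j) =
                               Q i j - (if 0 < i \<and> 0 < j then Q (i - 1) (j - 1) else 0)"
begin

lemma Nik_le_of_whitney_diff: "Nik V H k i \<le> Nik V G k i"
proof -
  have fin: "finite V" using G(1) by (simp add: simple_graph_def)
  define d where "d a b = real (whitney_coeff V G a b) - real (whitney_coeff V H a b)" for a b
  have "real (Nik V G k i) - real (Nik V H k i) =
        (\<Sum>j = 1..k. real (Nexact V G j i) - real (Nexact V H j i))"
    using simple_graph_finite_edges[OF G(1)] simple_graph_finite_edges[OF H(1)]
    by (simp add: Nik_eq_sum_Nexact[OF fin V_nonempty] sum_subtractf)
  also have "\<dots> = (\<Sum>j = 1..k. if card V \<le> i + j then d (j - 1) (i + j - card V) else 0)"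
    by (intro sum.cong refl)
      (simp add: Nexact_eq_whitney_coeff[OF G V_nonempty] Nexact_eq_whitney_coeff[OF H V_nonempty] d_def)
  also have "\<dots> = (if card V \<le> i + k \<and> 0 < k then Q (k - 1) (i + k - card V) else 0)"
    by (rule sum_diagonal_telescope) (use whitney_diff in \<open>simp add: d_def\<close>)
  also have "\<dots> \<ge> 0" using Q_nonneg by simp
  finally show ?thesis by simp
qed

lemma t_k_le_of_whitney_diff:
  assumes "0 < k"
  shows "t_k V H k \<le> t_k V G k"
proof -
  have "0 \<le> real (whitney_coeff V G (k - 1) 0) - real (whitney_coeff V H (k - 1) 0)"
    using whitney_diff Q_nonneg by simp
  then show ?thesis
    by (simp add: t_k_eq_whitney_coeff[OF G V_nonempty assms] t_k_eq_whitney_coeff[OF H V_nonempty assms])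
qed

end

lemma k_reliability_mono:
  assumes "card G = card H" "\<forall>i. Nik V H k i \<le> Nik V G k i" "0 \<le> p" "p \<le> 1"
  shows "k_reliability V H k p \<le> k_reliability V G k p"
  unfolding k_reliability_def assms(1)
  by (intro sum_mono mult_right_mono) (use assms in auto)

lemma edge_conn_k_le:
  assumes "finite E" "S \<subseteq> E" "k < kappa V (E - S)"
  shows "edge_conn_k V E k \<le> card S"
proof -
  have "{card S |S. S \<subseteq> E \<and> k < kappa V (E - S)} \<subseteq> {..card E}"
    using assms(1) by (auto intro: card_mono)
  then show ?thesis
    unfolding edge_conn_k_def using assms by (intro Min_le) (auto intro: finite_subset)
qed

lemma edge_conn_k_attained:
  assumes "finite E" "k < card V"
  obtains S where "S \<subseteq> E" "k < kappa V (E - S)" "card S = edge_conn_k V E k"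
proof -
  let ?C = "{card S |S. S \<subseteq> E \<and> k < kappa V (E - S)}"
  have "?C \<subseteq> {..card E}" using assms(1) by (auto intro: card_mono)
  moreover have "card E \<in> ?C" using assms(2) by (auto simp: kappa_empty)
  ultimately have "edge_conn_k V E k \<in> ?C"
    unfolding edge_conn_k_def by (intro Min_in) (auto intro: finite_subset)
  then show ?thesis using that by auto
qed

lemma Nik_eq_binomial_below_edge_conn:
  assumes "finite E" "s \<le> card E" "s < edge_conn_k V E k"
  shows "Nik V E k (card E - s) = card E choose (card E - s)"
proof -
  have "kappa V F \<le> k" if "F \<subseteq> E" "card F = card E - s" for F
  proof (rule ccontr)
    assume "\<not> kappa V F \<le> k"
    moreover have "E - (E - F) = F" using that(1) by blast
    moreover have "card (E - F) = s"
      using that assms(1,2) by (simp add: card_Diff_subset finite_subset)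
    ultimately show False using edge_conn_k_le[OF assms(1), of "E - F" k V] assms(3) by auto
  qed
  then have "{F. F \<subseteq> E \<and> card F = card E - s \<and> kappa V F \<le> k} = {F. F \<subseteq> E \<and> card F = card E - s}"
    by blast
  then show ?thesis by (simp add: Nik_def n_subsets assms(1))
qed

lemma Nik_less_binomial_at_edge_conn:
  assumes "finite E" "k < card V"
  shows "Nik V E k (card E - edge_conn_k V E k) < card E choose (card E - edge_conn_k V E k)"
proof -
  obtain S where S: "S \<subseteq> E" "k < kappa V (E - S)" "card S = edge_conn_k V E k"
    using edge_conn_k_attained[OF assms] .
  let ?i = "card E - card S"
  have "E - S \<in> {F. F \<subseteq> E \<and> card F = ?i} - {F. F \<subseteq> E \<and> card F = ?i \<and> kappa V F \<le> k}"
    using S assms(1) by (auto simp: card_Diff_subset finite_subset)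
  then have "{F. F \<subseteq> E \<and> card F = ?i \<and> kappa V F \<le> k} \<subset> {F. F \<subseteq> E \<and> card F = ?i}"
    by blast
  then have "Nik V E k ?i < card {F. F \<subseteq> E \<and> card F = ?i}"
    unfolding Nik_def using assms(1) by (intro psubset_card_mono) auto
  then show ?thesis using S(3) by (simp add: n_subsets assms(1))
qed

lemma edge_conn_k_mono:
  assumes "finite G" "finite H" "card G = card H" "k < card V" "\<forall>i. Nik V H k i \<le> Nik V G k i"
  shows "edge_conn_k V H k \<le> edge_conn_k V G k"
proof (rule ccontr)
  let ?s = "edge_conn_k V G k"
  assume "\<not> edge_conn_k V H k \<le> ?s"
  moreover have "?s \<le> card G"
    using edge_conn_k_attained[OF assms(1,4)] card_mono[OF assms(1)] by metis
  ultimately have "Nik V H k (card G - ?s) = card G choose (card G - ?s)"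
    using Nik_eq_binomial_below_edge_conn[OF assms(2)] assms(3) by simp
  then show False using Nik_less_binomial_at_edge_conn[OF assms(1,4)] assms(5) by (metis leD)
qed

lemma whitney_maximum_counts_le:
  assumes "whitney_maximum n m G" "H \<in> Cnm n m" "0 < n"
  shows "Nik {0..<n} H k i \<le> Nik {0..<n} G k i"
    and "0 < k \<Longrightarrow> t_k {0..<n} H k \<le> t_k {0..<n} G k"
proof -
  obtain Q where Q: "\<forall>i j. 0 \<le> Q i j"
    "\<forall>i j. real (whitney_coeff {0..<n} G i j) - real (whitney_coeff {0..<n} H i j) =
           Q i j - (if 0 < i \<and> 0 < j then Q (i - 1) (j - 1) else 0)"
    using assms(1,2) unfolding whitney_maximum_def by blast
  have G: "simple_graph {0..<n} G" "connected_graph {0..<n} G"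
    and H: "simple_graph {0..<n} H" "connected_graph {0..<n} H"
    using assms(1,2) by (simp_all add: whitney_maximum_def Cnm_def)
  have "{0..<n} \<noteq> {}" using assms(3) by simp
  from Nik_le_of_whitney_diff[OF G H this Q] t_k_le_of_whitney_diff[OF G H this Q]
  show "Nik {0..<n} H k i \<le> Nik {0..<n} G k i" "0 < k \<Longrightarrow> t_k {0..<n} H k \<le> t_k {0..<n} G k"
    by simp_all
qed

theorem mainTheorem7:
  fixes n m :: nat and G :: "nat set set"
  assumes "whitney_maximum n m G"
  shows "(\<forall>k\<in>{1..n}. \<forall>H\<in>Cnm n m. \<forall>p::real. 0 \<le> p \<and> p \<le> 1 \<longrightarrow>
            k_reliability {0..<n} G k p \<ge> k_reliability {0..<n} H k p)
       \<and> (\<forall>k\<in>{1..n-1}. \<forall>H\<in>Cnm n m. edge_conn_k {0..<n} G k \<ge> edge_conn_k {0..<n} H k)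
       \<and> (\<forall>k\<in>{1..n}. \<forall>H\<in>Cnm n m. t_k {0..<n} G k \<ge> t_k {0..<n} H k)"
proof (cases "n = 0")
  case False
  have Cnm_finite_card: "finite E" "card E = m" if "E \<in> Cnm n m" for E
    using that simple_graph_finite_edges by (auto simp: Cnm_def)
  have G: "G \<in> Cnm n m" using assms by (simp add: whitney_maximum_def)
  note counts_le = whitney_maximum_counts_le[OF assms]
  show ?thesis
  proof (intro conjI ballI allI impI)
    fix k H and p :: real assume "H \<in> Cnm n m" "0 \<le> p \<and> p \<le> 1"
    then show "k_reliability {0..<n} H k p \<le> k_reliability {0..<n} G k p"
      using False by (intro k_reliability_mono) (simp_all add: counts_le Cnm_finite_card G)
  next
    fix k H assume "k \<in> {1..n - 1}" "H \<in> Cnm n m"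
    then show "edge_conn_k {0..<n} H k \<le> edge_conn_k {0..<n} G k"
      using False by (intro edge_conn_k_mono) (auto simp: counts_le Cnm_finite_card G)
  next
    fix k H assume "k \<in> {1..n}" "H \<in> Cnm n m"
    then show "t_k {0..<n} H k \<le> t_k {0..<n} G k" using False counts_le(2) by simp
  qed
qed simp

end
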